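(* Let $G$ be a countable directed graph and let $x,y\in\mathcal{V}(G)$ with $x\neq y$. For $A\in\mathcal{T}_+(G)$, the coset $A+\mathcal{K}_{x,y}$ belongs to the Jacobson radical $\operatorname{rad}(\mathcal{T}_+(G)/\mathcal{K}_{x,y})$ if and only if $\pi(A)^2=0$ for all $\pi\in\operatorname{rep}_{x,y}(\mathcal{T}_+(G))$.
   Context: A countable directed graph $G$ has countable vertex set $\mathcal{V}(G)$, edge set $\mathcal{E}(G)$, range and source maps $r,s$. The free semigroupoid $\mathbb{F}^+(G)$ consists of vertices and finite paths $w=e_k\cdots e_1$ with $s(e_i)=r(e_{i-1})$, $s(w)=s(e_1)$, $r(w)=r(e_k)$. On $\ell^2(\mathbb{F}^+(G))$ with orthonormal basis $\{\xi_w\}$, $L_e\xi_w=\xi_{ew}$ if $s(e)=r(w)$ and $0$ otherwise, and $P_v$ is the projection onto $\overline{\operatorname{span}}\{\xi_w:r(w)=v\}$. $\mathcal{T}_+(G)$ is the norm-closed operator algebra generated by all $L_e$ and $P_v$. $\mathfrak{M}_{G,x}$ is the set of characters $\rho$ of $\mathcal{T}_+(G)$ with $\rho(P_x)=1$. A two-dimensional nest representation is a continuous homomorphism $\pi$ of $\mathcal{T}_+(G)$ onto $\operatorname{Alg}\mathcal{N}$, the algebra of operators on a 2-dimensional Hilbert space leaving a fixed one-dimensional subspace $N$ invariant; with unit vectors $h_2\in N$, $h_1\in N^\perp$, put $\rho^{(i)}_\pi(A)=\langle\pi(A)h_i,h_i\rangle$. $\operatorname{rep}_{x,y}(\mathcal{T}_+(G))$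 is the set of such $\pi$ with $\rho^{(1)}_\pi\in\mathfrak{M}_{G,x}$, $\rho^{(2)}_\pi\in\mathfrak{M}_{G,y}$, and $\mathcal{K}_{x,y}=\bigcap\{\ker\pi:\pi\in\operatorname{rep}_{x,y}(\mathcal{T}_+(G))\}$, a closed ideal. *)

theory Defs
  imports "HOL-Analysis.Analysis"
begin

text \<open>Elements of the free semigroupoid are encoded as
Inl v (a vertex v) or Inr es, where es = [e_k, ..., e_1] is a nonempty list of
edges (head = last edge traversed), with s(e_i) = r(e_(i-1)).\<close>

type_synonym ('v,'e) fpath = "'v + 'e list"
type_synonym ('v,'e) vecs = "('v,'e) fpath \<Rightarrow> complex"
type_synonym ('v,'e) op = "('v,'e) vecs \<Rightarrow> ('v,'e) vecs"

definition countable_digraph :: "'v set \<Rightarrow> 'e set \<Rightarrow> ('e \<Rightarrow> 'v) \<Rightarrow> ('e \<Rightarrow> 'v) \<Rightarrow> bool" where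
  "countable_digraph V E r s \<longleftrightarrow> countable V \<and> countable E \<and> (\<forall>e\<in>E. r e \<in> V \<and> s e \<in> V)"

definition edge_path :: "'e set \<Rightarrow> ('e \<Rightarrow> 'v) \<Rightarrow> ('e \<Rightarrow> 'v) \<Rightarrow> 'e list \<Rightarrow> bool" where
  "edge_path E r s es \<longleftrightarrow> es \<noteq> [] \<and> set es \<subseteq> E \<and>
     (\<forall>i. Suc i < length es \<longrightarrow> s (es ! i) = r (es ! Suc i))"

definition FP :: "'v set \<Rightarrow> 'e set \<Rightarrow> ('e \<Rightarrow> 'v) \<Rightarrow> ('e \<Rightarrow> 'v) \<Rightarrow> ('v,'e) fpath set" where
  "FP V E r s = Inl ` V \<union> Inr ` {es. edge_path E r s es}"

fun rng :: "('e \<Rightarrow> 'v) \<Rightarrow> ('v,'e) fpath \<Rightarrow> 'v" where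
  "rng r (Inl v) = v"
| "rng r (Inr es) = r (hd es)"

definition l2 :: "'v set \<Rightarrow> 'e set \<Rightarrow> ('e \<Rightarrow> 'v) \<Rightarrow> ('e \<Rightarrow> 'v) \<Rightarrow> ('v,'e) vecs set" where
  "l2 V E r s = {f. (\<forall>w. w \<notin> FP V E r s \<longrightarrow> f w = 0) \<and>
                    (\<lambda>w. (cmod (f w))^2) summable_on UNIV}"

definition l2norm :: "('v,'e) vecs \<Rightarrow> real" where
  "l2norm f = sqrt (\<Sum>\<^sub>\<infinity>w. (cmod (f w))^2)"

text \<open>Bounded operators on l^2(F+(G)); to have canonical representatives an
operator is required to vanish outside l^2.\<close>
definition is_op :: "'v set \<Rightarrow> 'e set \<Rightarrow> ('e \<Rightarrow> 'v) \<Rightarrow> ('e \<Rightarrow> 'v) \<Rightarrow> ('v,'e) op \<Rightarrow> bool" where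
  "is_op V E r s T \<longleftrightarrow>
     (\<forall>f. f \<notin> l2 V E r s \<longrightarrow> T f = (\<lambda>w. 0)) \<and>
     (\<forall>f\<in>l2 V E r s. T f \<in> l2 V E r s) \<and>
     (\<forall>f\<in>l2 V E r s. \<forall>g\<in>l2 V E r s. \<forall>c.
         T (\<lambda>w. f w + c * g w) = (\<lambda>w. T f w + c * T g w)) \<and>
     (\<exists>K. \<forall>f\<in>l2 V E r s. l2norm (T f) \<le> K * l2norm f)"

definition opnorm :: "'v set \<Rightarrow> 'e set \<Rightarrow> ('e \<Rightarrow> 'v) \<Rightarrow> ('e \<Rightarrow> 'v) \<Rightarrow> ('v,'e) op \<Rightarrow> real" where
  "opnorm V E r s T = Sup {l2norm (T f) | f. f \<in> l2 V E r s \<and> l2norm f \<le> 1}"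

definition op_add :: "('v,'e) op \<Rightarrow> ('v,'e) op \<Rightarrow> ('v,'e) op" where
  "op_add T S = (\<lambda>f w. T f w + S f w)"

definition op_sub :: "('v,'e) op \<Rightarrow> ('v,'e) op \<Rightarrow> ('v,'e) op" where
  "op_sub T S = (\<lambda>f w. T f w - S f w)"

definition op_smult :: "complex \<Rightarrow> ('v,'e) op \<Rightarrow> ('v,'e) op" where
  "op_smult c T = (\<lambda>f w. c * T f w)"

text \<open>Coefficients of L_e f: (L_e f)(e w) = f(w) when s(e) = r(w), and 0 at
paths not starting with e.\<close>
fun Lcoef :: "('e \<Rightarrow> 'v) \<Rightarrow> ('e \<Rightarrow> 'v) \<Rightarrow> 'e \<Rightarrow> ('v,'e) vecs \<Rightarrow> ('v,'e) fpath \<Rightarrow> complex" where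
  "Lcoef r s e f (Inr [e']) = (if e' = e then f (Inl (s e)) else 0)"
| "Lcoef r s e f (Inr (e' # e'' # u)) =
     (if e' = e \<and> s e = r e'' then f (Inr (e'' # u)) else 0)"
| "Lcoef r s e f _ = 0"

definition Lop :: "'v set \<Rightarrow> 'e set \<Rightarrow> ('e \<Rightarrow> 'v) \<Rightarrow> ('e \<Rightarrow> 'v) \<Rightarrow> 'e \<Rightarrow> ('v,'e) op" where
  "Lop V E r s e = (\<lambda>f. if f \<in> l2 V E r s then Lcoef r s e f else (\<lambda>w. 0))"

definition Pop :: "'v set \<Rightarrow> 'e set \<Rightarrow> ('e \<Rightarrow> 'v) \<Rightarrow> ('e \<Rightarrow> 'v) \<Rightarrow> 'v \<Rightarrow> ('v,'e) op" where
  "Pop V E r s v = (\<lambda>f. if f \<in> l2 V E r s then (\<lambda>w. if rng r w = v then f w else 0) else (\<lambda>w. 0))"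

inductive_set gen_alg :: "'v set \<Rightarrow> 'e set \<Rightarrow> ('e \<Rightarrow> 'v) \<Rightarrow> ('e \<Rightarrow> 'v) \<Rightarrow> ('v,'e) op set"
  for V E r s where
  gen_L: "e \<in> E \<Longrightarrow> Lop V E r s e \<in> gen_alg V E r s"
| gen_P: "v \<in> V \<Longrightarrow> Pop V E r s v \<in> gen_alg V E r s"
| gen_add: "T \<in> gen_alg V E r s \<Longrightarrow> S \<in> gen_alg V E r s \<Longrightarrow> op_add T S \<in> gen_alg V E r s"
| gen_smult: "T \<in> gen_alg V E r s \<Longrightarrow> op_smult c T \<in> gen_alg V E r s"
| gen_mult: "T \<in> gen_alg V E r s \<Longrightarrow> S \<in> gen_alg V E r s \<Longrightarrow> T \<circ> S \<in> gen_alg V E r s"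

definition Tplus :: "'v set \<Rightarrow> 'e set \<Rightarrow> ('e \<Rightarrow> 'v) \<Rightarrow> ('e \<Rightarrow> 'v) \<Rightarrow> ('v,'e) op set" where
  "Tplus V E r s = {T. is_op V E r s T \<and>
      (\<forall>\<epsilon>>0. \<exists>S\<in>gen_alg V E r s. opnorm V E r s (op_sub T S) < \<epsilon>)}"

definition is_character :: "('v,'e) op set \<Rightarrow> (('v,'e) op \<Rightarrow> complex) \<Rightarrow> bool" where
  "is_character Alg \<rho> \<longleftrightarrow>
     (\<forall>A\<in>Alg. \<forall>B\<in>Alg. \<forall>c. \<rho> (op_add A (op_smult c B)) = \<rho> A + c * \<rho> B) \<and>
     (\<forall>A\<in>Alg. \<forall>B\<in>Alg. \<rho> (A \<circ> B) = \<rho> A * \<rho> B) \<and>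
     (\<exists>A\<in>Alg. \<rho> A \<noteq> 0)"

definition Mchar :: "'v set \<Rightarrow> 'e set \<Rightarrow> ('e \<Rightarrow> 'v) \<Rightarrow> ('e \<Rightarrow> 'v) \<Rightarrow> 'v \<Rightarrow> (('v,'e) op \<Rightarrow> complex) set" where
  "Mchar V E r s x = {\<rho>. is_character (Tplus V E r s) \<rho> \<and> \<rho> (Pop V E r s x) = 1}"

text \<open>Alg N on the 2-dimensional space C^2 with N = span{e_2}, h_2 = e_2 in N,
h_1 = e_1 in N^perp: the operators M with M e_2 in N, i.e. M(1,2) = 0.\<close>
definition AlgN :: "(complex^2^2) set" where
  "AlgN = {M. M $ 1 $ 2 = 0}"

definition nest_rep :: "'v set \<Rightarrow> 'e set \<Rightarrow> ('e \<Rightarrow> 'v) \<Rightarrow> ('e \<Rightarrow> 'v) \<Rightarrow> (('v,'e) op \<Rightarrow> complex^2^2) \<Rightarrow> bool" where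
  "nest_rep V E r s \<pi> \<longleftrightarrow>
     (\<forall>A\<in>Tplus V E r s. \<forall>B\<in>Tplus V E r s. \<forall>c.
        \<pi> (op_add A (op_smult c B)) = \<pi> A + (\<chi> i j. c * \<pi> B $ i $ j)) \<and>
     (\<forall>A\<in>Tplus V E r s. \<forall>B\<in>Tplus V E r s. \<pi> (A \<circ> B) = \<pi> A ** \<pi> B) \<and>
     (\<exists>C. \<forall>A\<in>Tplus V E r s. norm (\<pi> A) \<le> C * opnorm V E r s A) \<and>
     \<pi> ` Tplus V E r s = AlgN"

text \<open>rho^(i)_pi(A) = < pi(A) h_i, h_i > = (i,i) entry.\<close>
definition rho_pi :: "(('v,'e) op \<Rightarrow> complex^2^2) \<Rightarrow> 2 \<Rightarrow> (('v,'e) op \<Rightarrow> complex)" where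
  "rho_pi \<pi> i = (\<lambda>A. \<pi> A $ i $ i)"

definition rep_xy :: "'v set \<Rightarrow> 'e set \<Rightarrow> ('e \<Rightarrow> 'v) \<Rightarrow> ('e \<Rightarrow> 'v) \<Rightarrow> 'v \<Rightarrow> 'v \<Rightarrow> (('v,'e) op \<Rightarrow> complex^2^2) set" where
  "rep_xy V E r s x y = {\<pi>. nest_rep V E r s \<pi> \<and>
      rho_pi \<pi> 1 \<in> Mchar V E r s x \<and> rho_pi \<pi> 2 \<in> Mchar V E r s y}"

definition Kxy :: "'v set \<Rightarrow> 'e set \<Rightarrow> ('e \<Rightarrow> 'v) \<Rightarrow> ('e \<Rightarrow> 'v) \<Rightarrow> 'v \<Rightarrow> 'v \<Rightarrow> ('v,'e) op set" where
  "Kxy V E r s x y = {A \<in> Tplus V E r s. \<forall>\<pi>\<in>rep_xy V E r s x y. \<pi> A = 0}"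

text \<open>Jacobson radical of the quotient algebra Alg/K (Jacobson's elementwise
definition, valid for non-unital algebras): the coset a = A + K lies in the
radical iff for every b = B + K the product b a is left quasi-regular, i.e.
there is c = C + K with c + ba - c(ba) = 0 in Alg/K.\<close>
definition in_rad_quot :: "('v,'e) op set \<Rightarrow> ('v,'e) op set \<Rightarrow> ('v,'e) op \<Rightarrow> bool" where
  "in_rad_quot Alg K A \<longleftrightarrow>
     (\<forall>B\<in>Alg. \<exists>C\<in>Alg. op_sub (op_add C (B \<circ> A)) (C \<circ> (B \<circ> A)) \<in> K)"

end

theory Submission
  imports Defs
begin

text \<open>
A nest representation \<open>\<pi>\<close> maps \<open>T\<^sub>+(G)\<close> onto the upper triangular \<open>2 \<times> 2\<close> matrices and
vanishes on \<open>K\<^sub>x\<^sub>,\<^sub>y\<close>, so quasi-regularity modulo \<open>K\<^sub>x\<^sub>,\<^sub>y\<close> passes to the image.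
If \<open>\<pi>(A)\<close> had a nonzero diagonal entry \<open>a\<close> in position \<open>i\<close>, choose \<open>B\<close> with
\<open>\<pi>(B) = a\<^sup>-\<^sup>1 E\<^sub>i\<^sub>i\<close>: then \<open>z = \<pi>(B)\<pi>(A)\<close> is triangular with \<open>z\<^sub>i\<^sub>i = 1\<close>, and no
triangular \<open>c\<close> satisfies \<open>c + z - cz = 0\<close>, because on the diagonal this reads
\<open>(1 - c\<^sub>i\<^sub>i)(1 - z\<^sub>i\<^sub>i) = 1\<close>. So \<open>\<pi>(A)\<close> has zero diagonal, i.e. \<open>\<pi>(A)\<^sup>2 = 0\<close>.
Conversely, if every \<open>\<pi>(A)\<close> squares to zero, then for \<open>Z = BA\<close> every \<open>\<pi>(Z)\<close> is strictly
triangular, hence \<open>Z\<^sup>2 \<in> K\<^sub>x\<^sub>,\<^sub>y\<close> and \<open>-Z\<close> is a quasi-inverse of \<open>Z\<close> modulo \<open>K\<^sub>x\<^sub>,\<^sub>y\<close>.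

Since \<open>\<pi>\<close> is only known to be linear and multiplicative on \<open>T\<^sub>+(G)\<close>, the one analytic
ingredient is that \<open>T\<^sub>+(G)\<close> is closed under linear combinations and products: the generators
are bounded, and approximation errors add up linearly.
\<close>

section \<open>Square-summable functions on the free semigroupoid\<close>

lemma l2_zero [simp]: "(\<lambda>w. 0) \<in> l2 V E r s"
  by (simp add: l2_def)

lemma l2_summable: "f \<in> l2 V E r s \<Longrightarrow> (\<lambda>w. (cmod (f w))^2) summable_on UNIV"
  by (simp add: l2_def)

lemma l2_vanishes: "f \<in> l2 V E r s \<Longrightarrow> w \<notin> FP V E r s \<Longrightarrow> f w = 0"
  by (simp add: l2_def)

lemma l2norm_nonneg: "0 \<le> l2norm f"
  by (simp add: l2norm_def infsum_nonneg)

lemma l2norm_zero [simp]: "l2norm (\<lambda>w. 0) = 0"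
  by (simp add: l2norm_def)

lemma l2_finite_sum_le:
  assumes "f \<in> l2 V E r s" "finite F"
  shows "(\<Sum>w\<in>F. (cmod (f w))^2) \<le> (\<Sum>\<^sub>\<infinity>w. (cmod (f w))^2)"
  using l2_summable[OF assms(1)] assms(2) by (intro finite_sum_le_infsum) auto

lemma l2I_finite_sums_bounded:
  assumes "\<And>w. w \<notin> FP V E r s \<Longrightarrow> g w = 0"
    and "\<And>F. finite F \<Longrightarrow> (\<Sum>w\<in>F. (cmod (g w))^2) \<le> K"
  shows "g \<in> l2 V E r s" "l2norm g \<le> sqrt K"
proof -
  have summable: "(\<lambda>w. (cmod (g w))^2) summable_on UNIV"
    by (rule nonneg_bdd_above_summable_on) (auto intro!: bdd_aboveI[where M=K] assms(2))
  then show "g \<in> l2 V E r s"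
    using assms(1) by (auto simp: l2_def)
  have "(\<Sum>\<^sub>\<infinity>w. (cmod (g w))^2) \<le> K"
    by (rule infsum_le_finite_sums[OF summable]) (use assms(2) in auto)
  then show "l2norm g \<le> sqrt K"
    by (simp add: l2norm_def)
qed

lemma L2_set_le_l2norm:
  assumes "f \<in> l2 V E r s" "finite F"
  shows "L2_set (\<lambda>w. cmod (f w)) F \<le> l2norm f"
  using l2_finite_sum_le[OF assms] by (simp add: L2_set_def l2norm_def)

lemma l2_add_smult:
  fixes f g :: "('v,'e) vecs"
  assumes f: "f \<in> l2 V E r s" and g: "g \<in> l2 V E r s"
  shows "(\<lambda>w. f w + c * g w) \<in> l2 V E r s"
    and "l2norm (\<lambda>w. f w + c * g w) \<le> l2norm f + cmod c * l2norm g"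
proof -
  let ?h = "\<lambda>w. f w + c * g w" and ?K = "l2norm f + cmod c * l2norm g"
  have vanishes: "?h w = 0" if "w \<notin> FP V E r s" for w
    using l2_vanishes[OF f that] l2_vanishes[OF g that] by simp
  have sums: "(\<Sum>w\<in>F. (cmod (?h w))^2) \<le> ?K^2" if F: "finite F" for F
  proof -
    have "L2_set (\<lambda>w. cmod (?h w)) F \<le> L2_set (\<lambda>w. cmod (f w) + cmod c * cmod (g w)) F"
      by (rule L2_set_mono) (auto intro: order_trans[OF norm_triangle_ineq] simp: norm_mult)
    also have "\<dots> \<le> L2_set (\<lambda>w. cmod (f w)) F + cmod c * L2_set (\<lambda>w. cmod (g w)) F"
      using L2_set_triangle_ineq by (metis L2_set_right_distrib norm_ge_zero)
    also have "\<dots> \<le> ?K"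
      using L2_set_le_l2norm[OF f F] L2_set_le_l2norm[OF g F] by (simp add: add_mono mult_left_mono)
    finally show ?thesis
      by (simp add: L2_set_def sqrt_le_D sum_nonneg)
  qed
  show "?h \<in> l2 V E r s"
    using vanishes sums by (rule l2I_finite_sums_bounded)
  have "l2norm ?h \<le> sqrt (?K^2)"
    using vanishes sums by (rule l2I_finite_sums_bounded)
  then show "l2norm ?h \<le> ?K"
    by (simp add: l2norm_nonneg)
qed

lemma l2_smult:
  assumes "f \<in> l2 V E r s"
  shows "(\<lambda>w. c * f w) \<in> l2 V E r s" "l2norm (\<lambda>w. c * f w) \<le> cmod c * l2norm f"
  using l2_add_smult[OF l2_zero assms, of c] by simp_all

lemma l2norm_eq_0D:
  assumes "f \<in> l2 V E r s" "l2norm f = 0"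
  shows "f = (\<lambda>w. 0)"
proof
  fix w
  have "(\<Sum>w\<in>{w}. (cmod (f w))^2) \<le> (\<Sum>\<^sub>\<infinity>w. (cmod (f w))^2)"
    by (rule l2_finite_sum_le[OF assms(1)]) simp
  moreover have "(\<Sum>\<^sub>\<infinity>w. (cmod (f w))^2) = 0"
    using assms(2) by (simp add: l2norm_def infsum_nonneg)
  ultimately show "f w = 0" by simp
qed

lemma l2_dominated_reindex:
  fixes g :: "('v,'e) vecs"
  assumes f: "f \<in> l2 V E r s"
    and vanishes: "\<And>w. w \<notin> FP V E r s \<Longrightarrow> g w = 0"
    and inj: "inj_on h {w. g w \<noteq> 0}"
    and dominated: "\<And>w. cmod (g w) \<le> cmod (f (h w))"
  shows "g \<in> l2 V E r s" "l2norm g \<le> l2norm f"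
proof -
  let ?S = "{w. g w \<noteq> 0}"
  have sums: "(\<Sum>w\<in>F. (cmod (g w))^2) \<le> (\<Sum>\<^sub>\<infinity>w. (cmod (f w))^2)" if F: "finite F" for F
  proof -
    have "(\<Sum>w\<in>F. (cmod (g w))^2) = (\<Sum>w\<in>F \<inter> ?S. (cmod (g w))^2)"
      by (rule sum.mono_neutral_right) (use F in auto)
    also have "\<dots> \<le> (\<Sum>w\<in>F \<inter> ?S. (cmod (f (h w)))^2)"
      by (intro sum_mono power_mono dominated norm_ge_zero)
    also have "\<dots> = (\<Sum>u\<in>h ` (F \<inter> ?S). (cmod (f u))^2)"
      using inj_on_subset[OF inj] by (subst sum.reindex) auto
    also have "\<dots> \<le> (\<Sum>\<^sub>\<infinity>w. (cmod (f w))^2)"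
      using F by (intro l2_finite_sum_le[OF f]) auto
    finally show ?thesis .
  qed
  show "g \<in> l2 V E r s"
    using vanishes sums by (rule l2I_finite_sums_bounded)
  have "l2norm g \<le> sqrt (\<Sum>\<^sub>\<infinity>w. (cmod (f w))^2)"
    using vanishes sums by (rule l2I_finite_sums_bounded)
  then show "l2norm g \<le> l2norm f"
    by (simp add: l2norm_def)
qed

section \<open>Bounded operators\<close>

lemma is_op_outside: "is_op V E r s T \<Longrightarrow> f \<notin> l2 V E r s \<Longrightarrow> T f = (\<lambda>w. 0)"
  by (simp add: is_op_def)

lemma is_op_l2: "is_op V E r s T \<Longrightarrow> f \<in> l2 V E r s \<Longrightarrow> T f \<in> l2 V E r s"
  by (simp add: is_op_def)

lemma is_op_linear:
  "is_op V E r s T \<Longrightarrow> f \<in> l2 V E r s \<Longrightarrow> g \<in> l2 V E r s \<Longrightarrow>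
     T (\<lambda>w. f w + c * g w) = (\<lambda>w. T f w + c * T g w)"
  by (simp add: is_op_def)

lemma is_op_zero:
  assumes "is_op V E r s T"
  shows "T (\<lambda>w. 0) = (\<lambda>w. 0)"
proof -
  have "T (\<lambda>w. 0) = (\<lambda>w. T (\<lambda>w. 0) w + T (\<lambda>w. 0) w)"
    using is_op_linear[OF assms l2_zero l2_zero, of 1] by simp
  then show ?thesis
    by (metis add_cancel_right_right)
qed

lemma is_op_bounded:
  assumes "is_op V E r s T"
  obtains K where "0 \<le> K" "\<And>f. f \<in> l2 V E r s \<Longrightarrow> l2norm (T f) \<le> K * l2norm f"
proof -
  obtain K where K: "\<forall>f\<in>l2 V E r s. l2norm (T f) \<le> K * l2norm f"
    using assms by (auto simp: is_op_def)
  show thesis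
    using K by (intro that[of "max K 0"]) (auto intro: order_trans[OF _ mult_right_mono] l2norm_nonneg)
qed

lemma is_op_restrict_l2:
  assumes "\<And>f. f \<in> l2 V E r s \<Longrightarrow> \<Phi> f \<in> l2 V E r s \<and> l2norm (\<Phi> f) \<le> l2norm f"
    and "\<And>f g c. f \<in> l2 V E r s \<Longrightarrow> g \<in> l2 V E r s \<Longrightarrow>
           \<Phi> (\<lambda>w. f w + c * g w) = (\<lambda>w. \<Phi> f w + c * \<Phi> g w)"
  shows "is_op V E r s (\<lambda>f. if f \<in> l2 V E r s then \<Phi> f else (\<lambda>w. 0))"
  unfolding is_op_def using assms(1) by (auto simp: assms(2) l2_add_smult(1) intro!: exI[of _ 1])

lemma opnorm_least:
  assumes "\<And>f. f \<in> l2 V E r s \<Longrightarrow> l2norm (T f) \<le> K * l2norm f" "0 \<le> K"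
  shows "opnorm V E r s T \<le> K"
  unfolding opnorm_def
proof (rule cSup_least)
  show "{l2norm (T f) |f. f \<in> l2 V E r s \<and> l2norm f \<le> 1} \<noteq> {}"
    using l2_zero l2norm_zero by fastforce
  fix x assume "x \<in> {l2norm (T f) |f. f \<in> l2 V E r s \<and> l2norm f \<le> 1}"
  then obtain f where f: "f \<in> l2 V E r s" "l2norm f \<le> 1" "x = l2norm (T f)"
    by blast
  then show "x \<le> K"
    using assms(1)[OF f(1)] assms(2) by (metis mult_left_le order_trans)
qed

lemma opnorm_upper:
  assumes T: "is_op V E r s T" and "f \<in> l2 V E r s" "l2norm f \<le> 1"
  shows "l2norm (T f) \<le> opnorm V E r s T"
  unfolding opnorm_def
proof (rule cSup_upper)
  show "l2norm (T f) \<in> {l2norm (T f) |f. f \<in> l2 V E r s \<and> l2norm f \<le> 1}"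
    using assms by blast
  obtain K where "0 \<le> K" "\<And>f. f \<in> l2 V E r s \<Longrightarrow> l2norm (T f) \<le> K * l2norm f"
    using is_op_bounded[OF T] by blast
  then show "bdd_above {l2norm (T f) |f. f \<in> l2 V E r s \<and> l2norm f \<le> 1}"
    by (intro bdd_aboveI[where M=K]) (auto intro: order_trans mult_left_le)
qed

lemma opnorm_nonneg: "is_op V E r s T \<Longrightarrow> 0 \<le> opnorm V E r s T"
  using opnorm_upper[OF _ l2_zero] l2norm_nonneg by (metis l2norm_zero order_trans zero_le_one)

lemma opnorm_bound:
  assumes T: "is_op V E r s T" and f: "f \<in> l2 V E r s"
  shows "l2norm (T f) \<le> opnorm V E r s T * l2norm f"
proof (cases "l2norm f = 0")
  case True
  then show ?thesis
    using l2norm_eq_0D[OF f] is_op_zero[OF T] by simp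
next
  case False
  define n where "n = l2norm f"
  have n: "0 < n"
    using False l2norm_nonneg[of f] by (simp add: n_def)
  define g where "g = (\<lambda>w. complex_of_real (1 / n) * f w)"
  have g: "g \<in> l2 V E r s"
    unfolding g_def by (rule l2_smult(1)[OF f])
  have "l2norm g \<le> 1"
    using l2_smult(2)[OF f, of "complex_of_real (1 / n)"] n by (simp add: g_def n_def norm_divide)
  then have Tg: "l2norm (T g) \<le> opnorm V E r s T"
    by (rule opnorm_upper[OF T g])
  have "T f = (\<lambda>w. complex_of_real n * T g w)"
    using is_op_linear[OF T l2_zero f, of "complex_of_real (1 / n)"] n
    by (simp add: g_def is_op_zero[OF T])
  then have "l2norm (T f) \<le> n * l2norm (T g)"
    using l2_smult(2)[OF is_op_l2[OF T g], of "complex_of_real n"] n by simp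
  also have "\<dots> \<le> n * opnorm V E r s T"
    using Tg n by simp
  finally show ?thesis
    by (simp add: n_def mult.commute)
qed

lemma is_op_add_smult:
  assumes X: "is_op V E r s X" and Y: "is_op V E r s Y"
  shows "is_op V E r s (op_add X (op_smult c Y))"
    and "opnorm V E r s (op_add X (op_smult c Y)) \<le> opnorm V E r s X + cmod c * opnorm V E r s Y"
proof -
  let ?K = "opnorm V E r s X + cmod c * opnorm V E r s Y"
  have bound: "l2norm (op_add X (op_smult c Y) f) \<le> ?K * l2norm f" if f: "f \<in> l2 V E r s" for f
  proof -
    have "l2norm (op_add X (op_smult c Y) f) \<le> l2norm (X f) + cmod c * l2norm (Y f)"
      using l2_add_smult(2)[OF is_op_l2[OF X f] is_op_l2[OF Y f]] by (simp add: op_add_def op_smult_def)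
    also have "\<dots> \<le> opnorm V E r s X * l2norm f + cmod c * (opnorm V E r s Y * l2norm f)"
      by (intro add_mono mult_left_mono opnorm_bound X Y f norm_ge_zero)
    finally show ?thesis
      by (simp add: algebra_simps)
  qed
  have K: "0 \<le> ?K"
    using opnorm_nonneg[OF X] opnorm_nonneg[OF Y] by simp
  show "opnorm V E r s (op_add X (op_smult c Y)) \<le> ?K"
    by (rule opnorm_least[OF bound K])
  show "is_op V E r s (op_add X (op_smult c Y))"
    unfolding is_op_def
  proof (intro conjI allI ballI impI)
    fix f assume "f \<notin> l2 V E r s"
    then show "op_add X (op_smult c Y) f = (\<lambda>w. 0)"
      by (simp add: op_add_def op_smult_def is_op_outside[OF X] is_op_outside[OF Y])
  next
    fix f assume "f \<in> l2 V E r s"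
    then show "op_add X (op_smult c Y) f \<in> l2 V E r s"
      unfolding op_add_def op_smult_def by (intro l2_add_smult is_op_l2[OF X] is_op_l2[OF Y])
  next
    fix f g d assume "f \<in> l2 V E r s" "g \<in> l2 V E r s"
    then show "op_add X (op_smult c Y) (\<lambda>w. f w + d * g w) =
        (\<lambda>w. op_add X (op_smult c Y) f w + d * op_add X (op_smult c Y) g w)"
      by (simp add: op_add_def op_smult_def is_op_linear[OF X] is_op_linear[OF Y] algebra_simps)
  qed (use bound in blast)
qed

lemma is_op_comp:
  assumes T: "is_op V E r s T" and S: "is_op V E r s S"
  shows "is_op V E r s (T \<circ> S)"
    and "opnorm V E r s (T \<circ> S) \<le> opnorm V E r s T * opnorm V E r s S"
proof -
  let ?K = "opnorm V E r s T * opnorm V E r s S"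
  have bound: "l2norm ((T \<circ> S) f) \<le> ?K * l2norm f" if f: "f \<in> l2 V E r s" for f
  proof -
    have "l2norm (T (S f)) \<le> opnorm V E r s T * l2norm (S f)"
      by (rule opnorm_bound[OF T is_op_l2[OF S f]])
    also have "\<dots> \<le> opnorm V E r s T * (opnorm V E r s S * l2norm f)"
      by (intro mult_left_mono opnorm_bound[OF S f] opnorm_nonneg[OF T])
    finally show ?thesis
      by simp
  qed
  show "opnorm V E r s (T \<circ> S) \<le> ?K"
    using opnorm_nonneg[OF T] opnorm_nonneg[OF S] by (intro opnorm_least[OF bound] mult_nonneg_nonneg)
  show "is_op V E r s (T \<circ> S)"
    unfolding is_op_def
  proof (intro conjI allI ballI impI)
    fix f assume "f \<notin> l2 V E r s"
    then show "(T \<circ> S) f = (\<lambda>w. 0)"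
      by (simp add: is_op_outside[OF S] is_op_zero[OF T])
  next
    fix f assume "f \<in> l2 V E r s"
    then show "(T \<circ> S) f \<in> l2 V E r s"
      by (simp add: is_op_l2[OF T] is_op_l2[OF S])
  next
    fix f g d assume "f \<in> l2 V E r s" "g \<in> l2 V E r s"
    then show "(T \<circ> S) (\<lambda>w. f w + d * g w) = (\<lambda>w. (T \<circ> S) f w + d * (T \<circ> S) g w)"
      by (simp add: is_op_linear[OF S] is_op_linear[OF T] is_op_l2[OF S])
  qed (use bound in blast)
qed

section \<open>The generators\<close>

lemma Pop_is_op: "is_op V E r s (Pop V E r s v)"
  unfolding Pop_def
proof (rule is_op_restrict_l2)
  fix f assume f: "f \<in> l2 V E r s"
  show "(\<lambda>w. if rng r w = v then f w else 0) \<in> l2 V E r s \<and>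
        l2norm (\<lambda>w. if rng r w = v then f w else 0) \<le> l2norm f"
    using l2_dominated_reindex[OF f, where h = id] l2_vanishes[OF f] by simp
qed auto

lemma edge_path_Cons:
  assumes "edge_path E r s es" "e \<in> E" "s e = r (hd es)"
  shows "edge_path E r s (e # es)"
  using assms unfolding edge_path_def by (auto simp: hd_conv_nth nth_Cons split: nat.split)

lemma Inr_in_FP_iff: "Inr es \<in> FP V E r s \<longleftrightarrow> edge_path E r s es"
  by (auto simp: FP_def)

text \<open>Left inverse of \<open>u \<mapsto> e u\<close>: the path consisting of \<open>e\<close> alone comes from the vertex \<open>s e\<close>.\<close>

definition drop_edge :: "('e \<Rightarrow> 'v) \<Rightarrow> 'e \<Rightarrow> ('v,'e) fpath \<Rightarrow> ('v,'e) fpath" where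
  "drop_edge s e w = (if tl (projr w) = [] then Inl (s e) else Inr (tl (projr w)))"

lemma Lcoef_add_smult: "Lcoef r s e (\<lambda>w. f w + c * g w) w = Lcoef r s e f w + c * Lcoef r s e g w"
  by (induction r s e f w rule: Lcoef.induct) auto

lemma Lcoef_nonzeroD: "Lcoef r s e f w \<noteq> 0 \<Longrightarrow> \<exists>u. w = Inr (e # u)"
  by (induction r s e f w rule: Lcoef.induct) (auto split: if_splits)

lemma norm_Lcoef_le: "cmod (Lcoef r s e f w) \<le> cmod (f (drop_edge s e w))"
  by (induction r s e f w rule: Lcoef.induct) (auto simp: drop_edge_def)

lemma inj_on_drop_edge: "inj_on (drop_edge s e) {w. \<exists>u. w = Inr (e # u)}"
  by (auto simp: inj_on_def drop_edge_def split: if_splits)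

lemma Lcoef_vanishes:
  assumes f: "f \<in> l2 V E r s" and e: "e \<in> E" and w: "w \<notin> FP V E r s"
  shows "Lcoef r s e f w = 0"
proof (rule ccontr)
  assume nz: "Lcoef r s e f w \<noteq> 0"
  obtain u where w_eq: "w = Inr (e # u)"
    using Lcoef_nonzeroD[OF nz] by blast
  have "edge_path E r s (e # u)"
  proof (cases u)
    case Nil
    then show ?thesis using e by (simp add: edge_path_def)
  next
    case (Cons e' u')
    have "s e = r e'" "f (Inr u) \<noteq> 0"
      using nz by (simp_all add: w_eq Cons split: if_splits)
    moreover have "edge_path E r s u"
      using l2_vanishes[OF f, of "Inr u"] calculation(2) by (auto simp: Inr_in_FP_iff)
    ultimately show ?thesis
      using e Cons by (intro edge_path_Cons) auto
  qed
  then show False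
    using w by (simp add: w_eq Inr_in_FP_iff)
qed

lemma Lop_is_op:
  assumes e: "e \<in> E"
  shows "is_op V E r s (Lop V E r s e)"
  unfolding Lop_def
proof (rule is_op_restrict_l2)
  fix f assume f: "f \<in> l2 V E r s"
  have inj: "inj_on (drop_edge s e) {w. Lcoef r s e f w \<noteq> 0}"
    by (rule inj_on_subset[OF inj_on_drop_edge]) (auto dest: Lcoef_nonzeroD)
  show "Lcoef r s e f \<in> l2 V E r s \<and> l2norm (Lcoef r s e f) \<le> l2norm f"
    using l2_dominated_reindex[OF f Lcoef_vanishes[OF f e] inj norm_Lcoef_le] by blast
qed (simp add: Lcoef_add_smult fun_eq_iff)

section \<open>\<open>T\<^sub>+(G)\<close> is an algebra\<close>

lemma op_add_eq_add_smult: "op_add X Y = op_add X (op_smult 1 Y)"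
  by (simp add: op_smult_def)

lemma op_smult_eq_add_smult: "op_smult c X = op_add X (op_smult (c - 1) X)"
  by (auto simp: op_add_def op_smult_def algebra_simps)

lemma op_sub_eq_add_smult: "op_sub X Y = op_add X (op_smult (-1) Y)"
  by (simp add: op_sub_def op_add_def op_smult_def)

lemma gen_alg_is_op: "T \<in> gen_alg V E r s \<Longrightarrow> is_op V E r s T"
proof (induction rule: gen_alg.induct)
  case (gen_add T S)
  then show ?case
    by (subst op_add_eq_add_smult) (rule is_op_add_smult)
next
  case (gen_smult T c)
  then show ?case
    by (subst op_smult_eq_add_smult) (rule is_op_add_smult)
next
  case (gen_mult T S)
  show ?case
    by (rule is_op_comp(1)[OF gen_mult.IH])
qed (auto intro: Lop_is_op Pop_is_op)

lemma is_op_sub: "is_op V E r s X \<Longrightarrow> is_op V E r s Y \<Longrightarrow> is_op V E r s (op_sub X Y)"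
  unfolding op_sub_eq_add_smult by (rule is_op_add_smult(1))

lemma Tplus_is_op: "T \<in> Tplus V E r s \<Longrightarrow> is_op V E r s T"
  by (simp add: Tplus_def)

lemma Tplus_approx:
  "T \<in> Tplus V E r s \<Longrightarrow> 0 < \<epsilon> \<Longrightarrow> \<exists>S\<in>gen_alg V E r s. opnorm V E r s (op_sub T S) < \<epsilon>"
  by (simp add: Tplus_def)

lemma TplusI_linear_error:
  assumes "is_op V E r s T"
    and "\<And>\<delta>. 0 < \<delta> \<Longrightarrow> \<delta> \<le> 1 \<Longrightarrow> \<exists>S\<in>gen_alg V E r s. opnorm V E r s (op_sub T S) \<le> K * \<delta>"
  shows "T \<in> Tplus V E r s"
  unfolding Tplus_def
proof (intro CollectI conjI allI impI assms(1))
  fix \<epsilon> :: real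
  assume \<epsilon>: "0 < \<epsilon>"
  define \<delta> where "\<delta> = min 1 (\<epsilon> / (2 * (\<bar>K\<bar> + 1)))"
  have \<delta>: "0 < \<delta>" "\<delta> \<le> 1"
    using \<epsilon> by (auto simp: \<delta>_def)
  obtain S where S: "S \<in> gen_alg V E r s" "opnorm V E r s (op_sub T S) \<le> K * \<delta>"
    using assms(2)[OF \<delta>] by blast
  have "K * \<delta> \<le> (\<bar>K\<bar> + 1) * \<delta>"
    using \<delta> by (intro mult_right_mono) auto
  also have "\<dots> \<le> (\<bar>K\<bar> + 1) * (\<epsilon> / (2 * (\<bar>K\<bar> + 1)))"
    by (intro mult_left_mono) (auto simp: \<delta>_def)
  also have "\<dots> = \<epsilon> / 2"
    by (simp add: field_simps add_pos_nonneg)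
  also have "\<dots> < \<epsilon>"
    using \<epsilon> by simp
  finally have "opnorm V E r s (op_sub T S) < \<epsilon>"
    using S(2) by linarith
  with S(1) show "\<exists>S\<in>gen_alg V E r s. opnorm V E r s (op_sub T S) < \<epsilon>"
    by blast
qed

lemma Tplus_add_smult:
  assumes X: "X \<in> Tplus V E r s" and Y: "Y \<in> Tplus V E r s"
  shows "op_add X (op_smult c Y) \<in> Tplus V E r s"
proof (rule TplusI_linear_error[where K = "1 + cmod c"])
  have Xo: "is_op V E r s X" and Yo: "is_op V E r s Y"
    using X Y by (simp_all add: Tplus_is_op)
  show "is_op V E r s (op_add X (op_smult c Y))"
    by (rule is_op_add_smult(1)[OF Xo Yo])
  fix \<delta> :: real
  assume "0 < \<delta>" "\<delta> \<le> 1"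
  obtain X' where X': "X' \<in> gen_alg V E r s" "opnorm V E r s (op_sub X X') < \<delta>"
    using Tplus_approx[OF X \<open>0 < \<delta>\<close>] by blast
  obtain Y' where Y': "Y' \<in> gen_alg V E r s" "opnorm V E r s (op_sub Y Y') < \<delta>"
    using Tplus_approx[OF Y \<open>0 < \<delta>\<close>] by blast
  have "op_sub (op_add X (op_smult c Y)) (op_add X' (op_smult c Y')) =
      op_add (op_sub X X') (op_smult c (op_sub Y Y'))"
    by (auto simp: op_sub_def op_add_def op_smult_def algebra_simps)
  then have "opnorm V E r s (op_sub (op_add X (op_smult c Y)) (op_add X' (op_smult c Y')))
      \<le> opnorm V E r s (op_sub X X') + cmod c * opnorm V E r s (op_sub Y Y')"
    using is_op_add_smult(2)[OF is_op_sub[OF Xo gen_alg_is_op[OF X'(1)]]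
        is_op_sub[OF Yo gen_alg_is_op[OF Y'(1)]]] by simp
  also have "\<dots> \<le> (1 + cmod c) * \<delta>"
    using X'(2) mult_left_mono[OF less_imp_le[OF Y'(2)] norm_ge_zero, of c]
    by (simp add: algebra_simps)
  finally show "\<exists>S\<in>gen_alg V E r s.
      opnorm V E r s (op_sub (op_add X (op_smult c Y)) S) \<le> (1 + cmod c) * \<delta>"
    using X'(1) Y'(1) by (blast intro: gen_alg.gen_add gen_alg.gen_smult)
qed

lemma Tplus_add: "X \<in> Tplus V E r s \<Longrightarrow> Y \<in> Tplus V E r s \<Longrightarrow> op_add X Y \<in> Tplus V E r s"
  unfolding op_add_eq_add_smult[of X Y] by (rule Tplus_add_smult)

lemma Tplus_smult: "X \<in> Tplus V E r s \<Longrightarrow> op_smult c X \<in> Tplus V E r s"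
  unfolding op_smult_eq_add_smult[of c X] by (rule Tplus_add_smult)

lemma op_sub_comp_comp:
  assumes T': "is_op V E r s T'" and S: "is_op V E r s S" and S': "is_op V E r s S'"
  shows "op_sub (T \<circ> S) (T' \<circ> S') = op_add (op_sub T T' \<circ> S) (op_smult 1 (T' \<circ> op_sub S S'))"
proof
  fix f
  show "op_sub (T \<circ> S) (T' \<circ> S') f = op_add (op_sub T T' \<circ> S) (op_smult 1 (T' \<circ> op_sub S S')) f"
  proof (cases "f \<in> l2 V E r s")
    case True
    have "T' (op_sub S S' f) = (\<lambda>w. T' (S f) w - T' (S' f) w)"
      using is_op_linear[OF T' is_op_l2[OF S True] is_op_l2[OF S' True], of "-1"]
      by (simp add: op_sub_def)
    then show ?thesis
      by (simp add: op_add_def op_smult_def) (simp add: op_sub_def)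
  next
    case False
    then show ?thesis
      by (simp add: op_sub_def op_add_def op_smult_def is_op_outside[OF S] is_op_outside[OF S']
          is_op_zero[OF T'])
  qed
qed

lemma Tplus_comp:
  assumes T: "T \<in> Tplus V E r s" and S: "S \<in> Tplus V E r s"
  shows "T \<circ> S \<in> Tplus V E r s"
proof (rule TplusI_linear_error[where K = "opnorm V E r s T + opnorm V E r s S + 1"])
  have To: "is_op V E r s T" and So: "is_op V E r s S"
    using T S by (simp_all add: Tplus_is_op)
  show "is_op V E r s (T \<circ> S)"
    by (rule is_op_comp(1)[OF To So])
  fix \<delta> :: real
  assume \<delta>: "0 < \<delta>" "\<delta> \<le> 1"
  obtain T' where T': "T' \<in> gen_alg V E r s" "opnorm V E r s (op_sub T T') < \<delta>"
    using Tplus_approx[OF T \<delta>(1)] by blast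
  obtain S' where S': "S' \<in> gen_alg V E r s" "opnorm V E r s (op_sub S S') < \<delta>"
    using Tplus_approx[OF S \<delta>(1)] by blast
  have T'o: "is_op V E r s T'" and S'o: "is_op V E r s S'"
    using T'(1) S'(1) by (simp_all add: gen_alg_is_op)
  have DT: "is_op V E r s (op_sub T T')" and DS: "is_op V E r s (op_sub S S')"
    using To T'o So S'o by (simp_all add: is_op_sub)
  have T'_eq: "op_add T (op_smult (-1) (op_sub T T')) = T'"
    by (simp add: op_add_def op_smult_def op_sub_def)
  have norm_T': "opnorm V E r s T' \<le> opnorm V E r s T + \<delta>"
    using is_op_add_smult(2)[OF To DT, of "-1"] T'(2) unfolding T'_eq by simp
  have "opnorm V E r s (op_sub (T \<circ> S) (T' \<circ> S'))
      \<le> opnorm V E r s (op_sub T T' \<circ> S) + cmod 1 * opnorm V E r s (T' \<circ> op_sub S S')"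
    unfolding op_sub_comp_comp[OF T'o So S'o]
    by (rule is_op_add_smult(2)[OF is_op_comp(1)[OF DT So] is_op_comp(1)[OF T'o DS]])
  also have "\<dots> \<le> opnorm V E r s (op_sub T T') * opnorm V E r s S
      + opnorm V E r s T' * opnorm V E r s (op_sub S S')"
    using is_op_comp(2)[OF DT So] is_op_comp(2)[OF T'o DS] by simp
  also have "\<dots> \<le> \<delta> * opnorm V E r s S + (opnorm V E r s T + \<delta>) * \<delta>"
    using T'(2) S'(2) norm_T' \<delta>(1) opnorm_nonneg[OF So] opnorm_nonneg[OF T'o] opnorm_nonneg[OF DS]
    by (intro add_mono mult_mono) auto
  also have "\<dots> \<le> (opnorm V E r s T + opnorm V E r s S + 1) * \<delta>"
    using \<delta> by (simp add: algebra_simps mult_left_le)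
  finally show "\<exists>G\<in>gen_alg V E r s. opnorm V E r s (op_sub (T \<circ> S) G)
      \<le> (opnorm V E r s T + opnorm V E r s S + 1) * \<delta>"
    using gen_alg.gen_mult[OF T'(1) S'(1)] by blast
qed

section \<open>Upper triangular \<open>2 \<times> 2\<close> matrices\<close>

lemma AlgN_mult: "P \<in> AlgN \<Longrightarrow> Q \<in> AlgN \<Longrightarrow> P ** Q \<in> AlgN"
  by (simp add: AlgN_def matrix_matrix_mult_def sum_2)

lemma AlgN_mult_diag:
  assumes "P \<in> AlgN" "Q \<in> AlgN"
  shows "(P ** Q) $ i $ i = P $ i $ i * Q $ i $ i"
  using assms exhaust_2[of i] by (auto simp: AlgN_def matrix_matrix_mult_def sum_2)

lemma AlgN_square_eq_0_iff:
  assumes "Q \<in> AlgN"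
  shows "Q ** Q = 0 \<longleftrightarrow> Q $ 1 $ 1 = 0 \<and> Q $ 2 $ 2 = 0"
  using assms by (auto simp: AlgN_def matrix_matrix_mult_def sum_2 vec_eq_iff forall_2)

lemma AlgN_mult_square_eq_0:
  assumes P: "P \<in> AlgN" and Q: "Q \<in> AlgN" and "Q ** Q = 0"
  shows "(P ** Q) ** (P ** Q) = 0"
  using assms AlgN_square_eq_0_iff[OF Q] AlgN_square_eq_0_iff[OF AlgN_mult[OF P Q]]
  by (simp add: AlgN_mult_diag[OF P Q])

lemma AlgN_quasi_inverse_diag_neq_1:
  assumes "P \<in> AlgN" "Z \<in> AlgN" "P + Z - P ** Z = 0"
  shows "Z $ i $ i \<noteq> 1"
proof
  assume "Z $ i $ i = 1"
  then have "(P + Z - P ** Z) $ i $ i = 1"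
    by (simp add: AlgN_mult_diag[OF assms(1,2)])
  then show False
    using assms(3) by simp
qed

section \<open>Nest representations and the radical\<close>

lemma nest_rep_add_smult:
  "nest_rep V E r s \<pi> \<Longrightarrow> X \<in> Tplus V E r s \<Longrightarrow> Y \<in> Tplus V E r s \<Longrightarrow>
     \<pi> (op_add X (op_smult c Y)) = \<pi> X + (\<chi> i j. c * \<pi> Y $ i $ j)"
  by (simp add: nest_rep_def)

lemma nest_rep_add:
  "nest_rep V E r s \<pi> \<Longrightarrow> X \<in> Tplus V E r s \<Longrightarrow> Y \<in> Tplus V E r s \<Longrightarrow>
     \<pi> (op_add X Y) = \<pi> X + \<pi> Y"
  using nest_rep_add_smult[of V E r s \<pi> X Y 1] by (simp add: op_add_eq_add_smult[of X Y])

lemma nest_rep_sub: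
  "nest_rep V E r s \<pi> \<Longrightarrow> X \<in> Tplus V E r s \<Longrightarrow> Y \<in> Tplus V E r s \<Longrightarrow>
     \<pi> (op_sub X Y) = \<pi> X - \<pi> Y"
  using nest_rep_add_smult[of V E r s \<pi> X Y "-1"] by (simp add: op_sub_eq_add_smult vec_eq_iff)

lemma nest_rep_comp:
  "nest_rep V E r s \<pi> \<Longrightarrow> X \<in> Tplus V E r s \<Longrightarrow> Y \<in> Tplus V E r s \<Longrightarrow> \<pi> (X \<circ> Y) = \<pi> X ** \<pi> Y"
  by (simp add: nest_rep_def)

lemma nest_rep_AlgN: "nest_rep V E r s \<pi> \<Longrightarrow> X \<in> Tplus V E r s \<Longrightarrow> \<pi> X \<in> AlgN"
  by (auto simp: nest_rep_def)

lemma nest_rep_onto: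
  assumes "nest_rep V E r s \<pi>" "M \<in> AlgN"
  obtains B where "B \<in> Tplus V E r s" "\<pi> B = M"
  using assms unfolding nest_rep_def by (metis imageE)

lemma rep_xy_nest_rep: "\<pi> \<in> rep_xy V E r s x y \<Longrightarrow> nest_rep V E r s \<pi>"
  by (simp add: rep_xy_def)

lemma in_rad_quot_rep_quasi_inverse:
  assumes rad: "in_rad_quot (Tplus V E r s) (Kxy V E r s x y) A"
    and A: "A \<in> Tplus V E r s" and B: "B \<in> Tplus V E r s" and \<pi>: "\<pi> \<in> rep_xy V E r s x y"
  obtains C where "C \<in> Tplus V E r s" "\<pi> C + \<pi> B ** \<pi> A - \<pi> C ** (\<pi> B ** \<pi> A) = 0"
proof -
  obtain C where C: "C \<in> Tplus V E r s"
    and K: "op_sub (op_add C (B \<circ> A)) (C \<circ> (B \<circ> A)) \<in> Kxy V E r s x y"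
    using rad B by (auto simp: in_rad_quot_def)
  have nest: "nest_rep V E r s \<pi>"
    using \<pi> by (rule rep_xy_nest_rep)
  have BA: "B \<circ> A \<in> Tplus V E r s"
    using B A by (rule Tplus_comp)
  have "\<pi> (op_sub (op_add C (B \<circ> A)) (C \<circ> (B \<circ> A))) = \<pi> C + \<pi> B ** \<pi> A - \<pi> C ** (\<pi> B ** \<pi> A)"
    using C A B BA
    by (simp add: nest_rep_sub[OF nest] nest_rep_add[OF nest] nest_rep_comp[OF nest] Tplus_add Tplus_comp)
  moreover have "\<pi> (op_sub (op_add C (B \<circ> A)) (C \<circ> (B \<circ> A))) = 0"
    using K \<pi> by (simp add: Kxy_def)
  ultimately show thesis
    using that C by simp
qed

lemma in_rad_quot_rep_diag_eq_0:
  assumes rad: "in_rad_quot (Tplus V E r s) (Kxy V E r s x y) A"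
    and A: "A \<in> Tplus V E r s" and \<pi>: "\<pi> \<in> rep_xy V E r s x y"
  shows "\<pi> A $ i $ i = 0"
proof (rule ccontr)
  assume a: "\<pi> A $ i $ i \<noteq> 0"
  have nest: "nest_rep V E r s \<pi>"
    using \<pi> by (rule rep_xy_nest_rep)
  define D :: "complex^2^2" where "D = (\<chi> k l. if k = i \<and> l = i then 1 / \<pi> A $ i $ i else 0)"
  have D: "D \<in> AlgN"
    by (auto simp: D_def AlgN_def)
  then obtain B where B: "B \<in> Tplus V E r s" "\<pi> B = D"
    using nest_rep_onto[OF nest] by blast
  obtain C where C: "C \<in> Tplus V E r s" "\<pi> C + \<pi> B ** \<pi> A - \<pi> C ** (\<pi> B ** \<pi> A) = 0"
    using in_rad_quot_rep_quasi_inverse[OF rad A B(1) \<pi>] by blast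
  have "(\<pi> B ** \<pi> A) $ i $ i = 1"
    using a AlgN_mult_diag[OF D nest_rep_AlgN[OF nest A]] by (simp add: B(2) D_def)
  then show False
    using AlgN_quasi_inverse_diag_neq_1[OF nest_rep_AlgN[OF nest C(1)] AlgN_mult C(2)]
      nest_rep_AlgN[OF nest] A B(1) by blast
qed

lemma in_rad_quotI_square:
  assumes "\<And>B. B \<in> Alg \<Longrightarrow> op_smult (-1) (B \<circ> A) \<in> Alg"
    and "\<And>B. B \<in> Alg \<Longrightarrow> (B \<circ> A) \<circ> (B \<circ> A) \<in> K"
  shows "in_rad_quot Alg K A"
  unfolding in_rad_quot_def
proof
  fix B
  assume B: "B \<in> Alg"
  have "op_sub (op_add (op_smult (-1) (B \<circ> A)) (B \<circ> A)) (op_smult (-1) (B \<circ> A) \<circ> (B \<circ> A))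
      = (B \<circ> A) \<circ> (B \<circ> A)"
    by (simp add: op_sub_def op_add_def op_smult_def comp_def)
  then show "\<exists>C\<in>Alg. op_sub (op_add C (B \<circ> A)) (C \<circ> (B \<circ> A)) \<in> K"
    using assms[OF B] by metis
qed

theorem proposition2p7:
  fixes V :: "'v set" and E :: "'e set" and r s :: "'e \<Rightarrow> 'v" and x y :: 'v
    and A :: "('v,'e) op"
  assumes "countable_digraph V E r s"
    and "x \<in> V" and "y \<in> V" and "x \<noteq> y"
    and "A \<in> Tplus V E r s"
  shows "in_rad_quot (Tplus V E r s) (Kxy V E r s x y) A \<longleftrightarrow>
         (\<forall>\<pi>\<in>rep_xy V E r s x y. \<pi> A ** \<pi> A = 0)"
proof
  have A: "A \<in> Tplus V E r s" by fact
  show "\<forall>\<pi>\<in>rep_xy V E r s x y. \<pi> A ** \<pi> A = 0"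
    if rad: "in_rad_quot (Tplus V E r s) (Kxy V E r s x y) A"
    using AlgN_square_eq_0_iff[OF nest_rep_AlgN[OF rep_xy_nest_rep A]]
      in_rad_quot_rep_diag_eq_0[OF rad A] by blast
  show "in_rad_quot (Tplus V E r s) (Kxy V E r s x y) A"
    if nilpotent: "\<forall>\<pi>\<in>rep_xy V E r s x y. \<pi> A ** \<pi> A = 0"
  proof (rule in_rad_quotI_square)
    fix B
    assume B: "B \<in> Tplus V E r s"
    then have BA: "B \<circ> A \<in> Tplus V E r s"
      using A by (rule Tplus_comp)
    then show "op_smult (-1) (B \<circ> A) \<in> Tplus V E r s"
      by (rule Tplus_smult)
    have "\<pi> ((B \<circ> A) \<circ> (B \<circ> A)) = 0" if \<pi>: "\<pi> \<in> rep_xy V E r s x y" for \<pi>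
      using nilpotent \<pi> A B BA rep_xy_nest_rep[OF \<pi>]
      by (simp add: nest_rep_comp AlgN_mult_square_eq_0 nest_rep_AlgN)
    then show "(B \<circ> A) \<circ> (B \<circ> A) \<in> Kxy V E r s x y"
      using Tplus_comp[OF BA BA] by (simp add: Kxy_def)
  qed
qed

end
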